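(* Let $\mathbb{C}$ be a category with pullbacks, $\mathrm{I}$ a set, and $\mathscr{U}=(U,(U_i,\iota_i)_{i\in\mathrm{I}})$ a sink in $\mathbb{C}$. Let $\mathbf{G}:\mathbb{S}_2(\mathrm{I})^{op}\to\mathbb{C}$ be a functor with $\mathbf{G}(i)=U_i$ for all $i\in\mathrm{I}$, and suppose $\mathbf{G}$ has a colimit cocone $(U,(\lambda_x)_{x\in\mathbb{S}_2(\mathrm{I})})$ with $\lambda_i=\iota_i$ for all $i\in\mathrm{I}$. Then $(U,(\mu_x)_{x})$, where $\mu_i:=\iota_i$ and $\mu_{(i,j)}:=\iota_i\circ\mathrm{pr}_1:U_i\times_UU_j\to U$, is a colimit cocone of the canonical functor $\mathbf{D}_{\mathscr{U}}:\mathbb{S}_2(\mathrm{I})^{op}\to\mathbb{C}$ associated with $\mathscr{U}$.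
   Context: A sink to $U$ in $\mathbb{C}$ is a family of morphisms $\iota_i:U_i\to U$, $i\in\mathrm{I}$. For a set $\mathrm{I}$, $\mathbb{S}_2(\mathrm{I})$ (the split truncated power set category of order 2) is the category whose objects are the elements $i\in\mathrm{I}$ and the ordered pairs $(i,j)\in\mathrm{I}^2$, generated by morphisms $\mathfrak{i}^s_{i,j}:i\to(i,j)$ for all $i,j\in\mathrm{I}$ (including $i=j$) and isomorphisms $\tau_{i,j}:(i,j)\to(j,i)$ with $\tau_{i,j}^{-1}=\tau_{j,i}$ (with $\tau_{i,i}$ a non-identity involution), with no further relations; thus the non-identity morphisms are the $\tau_{i,j}$, the $\mathfrak{i}^s_{i,j}$, and the composites $\tau_{i,j}\circ\mathfrak{i}^s_{i,j}:i\to(j,i)$. For a functor $\mathbf{G}:\mathbb{S}_2(\mathrm{I})^{op}\to\mathbb{C}$, a cocone with apex $L$ is a family $\lambda_x:\mathbf{G}(x)\to L$ with $\lambda_x\circ\mathbf{G}(f)=\lambda_y$ for every $f:x\to y$ in $\mathbb{S}_2(\mathrm{I})$. The canonical functor $\mathbf{D}_{\mathscr{U}}:\mathbb{S}_2(\mathrm{I})^{op}\to\mathbb{C}$ is given by $\mathbf{D}_{\mathscr{U}}(i)=U_i$, $\mathbf{D}_{\mathscr{U}}((i,j))=U_i\times_UU_j$ (pullback of $\iota_i,\iota_j$), $\mathbf{D}_{\mathscr{U}}(\mathfrak{i}^s_{i,j})=\mathrm{pr}_1:U_i\times_UU_j\to U_i$, and $\mathbf{D}_{\mathscr{U}}(\tau_{i,j}):U_j\times_UU_i\to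 U_i\times_UU_j$ the canonical swap isomorphism. *)

theory Defs
  imports Main
begin

record ('o, 'a) cat =
  Obj :: "'o set"
  Arr :: "'a set"
  Dom :: "'a \<Rightarrow> 'o"
  Cod :: "'a \<Rightarrow> 'o"
  Comp :: "'a \<Rightarrow> 'a \<Rightarrow> 'a"   (* Comp C g f = g \<circ> f *)
  Ident :: "'o \<Rightarrow> 'a"

definition hom :: "('o, 'a) cat \<Rightarrow> 'o \<Rightarrow> 'o \<Rightarrow> 'a set" where
  "hom C x y = {f \<in> Arr C. Dom C f = x \<and> Cod C f = y}"

definition category :: "('o, 'a) cat \<Rightarrow> bool" where
  "category C \<longleftrightarrow>
     (\<forall>f\<in>Arr C. Dom C f \<in> Obj C \<and> Cod C f \<in> Obj C) \<and>
     (\<forall>x\<in>Obj C. Ident C x \<in> hom C x x) \<and>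
     (\<forall>f\<in>Arr C. \<forall>g\<in>Arr C. Cod C f = Dom C g \<longrightarrow> Comp C g f \<in> hom C (Dom C f) (Cod C g)) \<and>
     (\<forall>f\<in>Arr C. Comp C (Ident C (Cod C f)) f = f \<and> Comp C f (Ident C (Dom C f)) = f) \<and>
     (\<forall>f\<in>Arr C. \<forall>g\<in>Arr C. \<forall>h\<in>Arr C. Cod C f = Dom C g \<longrightarrow> Cod C g = Dom C h \<longrightarrow>
         Comp C h (Comp C g f) = Comp C (Comp C h g) f)"

definition op_cat :: "('o, 'a) cat \<Rightarrow> ('o, 'a) cat" where
  "op_cat C = C\<lparr>Dom := Cod C, Cod := Dom C, Comp := (\<lambda>g f. Comp C f g)\<rparr>"

definition is_pullback :: "('o, 'a) cat \<Rightarrow> 'a \<Rightarrow> 'a \<Rightarrow> 'o \<Rightarrow> 'a \<Rightarrow> 'a \<Rightarrow> bool" where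
  "is_pullback C f g P p q \<longleftrightarrow>
     f \<in> Arr C \<and> g \<in> Arr C \<and> Cod C f = Cod C g \<and> P \<in> Obj C \<and>
     p \<in> hom C P (Dom C f) \<and> q \<in> hom C P (Dom C g) \<and>
     Comp C f p = Comp C g q \<and>
     (\<forall>Q a b. a \<in> hom C Q (Dom C f) \<and> b \<in> hom C Q (Dom C g) \<and> Comp C f a = Comp C g b \<longrightarrow>
        (\<exists>!h. h \<in> hom C Q P \<and> Comp C p h = a \<and> Comp C q h = b))"

definition has_pullbacks :: "('o, 'a) cat \<Rightarrow> bool" where
  "has_pullbacks C \<longleftrightarrow>
     (\<forall>f\<in>Arr C. \<forall>g\<in>Arr C. Cod C f = Cod C g \<longrightarrow> (\<exists>P p q. is_pullback C f g P p q))"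

definition is_functor :: "('p, 'b) cat \<Rightarrow> ('o, 'a) cat \<Rightarrow> ('p \<Rightarrow> 'o) \<Rightarrow> ('b \<Rightarrow> 'a) \<Rightarrow> bool" where
  "is_functor J C Fo Fa \<longleftrightarrow>
     (\<forall>x\<in>Obj J. Fo x \<in> Obj C) \<and>
     (\<forall>f\<in>Arr J. Fa f \<in> hom C (Fo (Dom J f)) (Fo (Cod J f))) \<and>
     (\<forall>x\<in>Obj J. Fa (Ident J x) = Ident C (Fo x)) \<and>
     (\<forall>f\<in>Arr J. \<forall>g\<in>Arr J. Cod J f = Dom J g \<longrightarrow> Fa (Comp J g f) = Comp C (Fa g) (Fa f))"

definition is_cocone :: "('p, 'b) cat \<Rightarrow> ('o, 'a) cat \<Rightarrow> ('p \<Rightarrow> 'o) \<Rightarrow> ('b \<Rightarrow> 'a) \<Rightarrow> 'o \<Rightarrow> ('p \<Rightarrow> 'a) \<Rightarrow> bool" where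
  "is_cocone J C Fo Fa L lam \<longleftrightarrow>
     L \<in> Obj C \<and>
     (\<forall>x\<in>Obj J. lam x \<in> hom C (Fo x) L) \<and>
     (\<forall>f\<in>Arr J. Comp C (lam (Cod J f)) (Fa f) = lam (Dom J f))"

definition is_colimit_cocone :: "('p, 'b) cat \<Rightarrow> ('o, 'a) cat \<Rightarrow> ('p \<Rightarrow> 'o) \<Rightarrow> ('b \<Rightarrow> 'a) \<Rightarrow> 'o \<Rightarrow> ('p \<Rightarrow> 'a) \<Rightarrow> bool" where
  "is_colimit_cocone J C Fo Fa L lam \<longleftrightarrow>
     is_cocone J C Fo Fa L lam \<and>
     (\<forall>L' mu. is_cocone J C Fo Fa L' mu \<longrightarrow>
        (\<exists>!u. u \<in> hom C L L' \<and> (\<forall>x\<in>Obj J. Comp C u (lam x) = mu x)))"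

datatype 'i s2obj = Sing 'i | Pr 'i 'i

text \<open>Arrows: identities, \<open>SIncl i j = i^s_{i,j} : i \<rightarrow> (i,j)\<close>, \<open>STau i j = \<tau>_{i,j} : (i,j) \<rightarrow> (j,i)\<close>,
  and \<open>STauIncl i j = \<tau>_{i,j} \<circ> i^s_{i,j} : i \<rightarrow> (j,i)\<close>.\<close>
datatype 'i s2arr = SId "'i s2obj" | SIncl 'i 'i | STau 'i 'i | STauIncl 'i 'i

fun s2dom :: "'i s2arr \<Rightarrow> 'i s2obj" where
  "s2dom (SId x) = x"
| "s2dom (SIncl i j) = Sing i"
| "s2dom (STau i j) = Pr i j"
| "s2dom (STauIncl i j) = Sing i"

fun s2cod :: "'i s2arr \<Rightarrow> 'i s2obj" where
  "s2cod (SId x) = x"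
| "s2cod (SIncl i j) = Pr i j"
| "s2cod (STau i j) = Pr j i"
| "s2cod (STauIncl i j) = Pr j i"

text \<open>Composition \<open>s2comp g f = g \<circ> f\<close> (only meaningful when \<open>s2cod f = s2dom g\<close>).\<close>
fun s2comp :: "'i s2arr \<Rightarrow> 'i s2arr \<Rightarrow> 'i s2arr" where
  "s2comp g (SId x) = g"
| "s2comp (SId x) f = f"
| "s2comp (STau a b) (STau i j) = SId (Pr i j)"
| "s2comp (STau a b) (SIncl i j) = STauIncl i j"
| "s2comp (STau a b) (STauIncl i j) = SIncl i j"
| "s2comp g f = undefined"

definition S2 :: "'i set \<Rightarrow> ('i s2obj, 'i s2arr) cat" where
  "S2 I = \<lparr>Obj = {Sing i | i. i \<in> I} \<union> {Pr i j | i j. i \<in> I \<and> j \<in> I},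
           Arr = {SId (Sing i) | i. i \<in> I} \<union> {SId (Pr i j) | i j. i \<in> I \<and> j \<in> I}
                 \<union> {SIncl i j | i j. i \<in> I \<and> j \<in> I} \<union> {STau i j | i j. i \<in> I \<and> j \<in> I}
                 \<union> {STauIncl i j | i j. i \<in> I \<and> j \<in> I},
           Dom = s2dom, Cod = s2cod, Comp = s2comp, Ident = SId\<rparr>"

text \<open>Given, for all i j, a chosen pullback \<open>(P i j, p1 i j, p2 i j)\<close> of \<open>\<iota> i, \<iota> j\<close>
  (so \<open>P i j = U_i \<times>_U U_j\<close>, \<open>p1 i j = pr_1\<close>, \<open>p2 i j = pr_2\<close>).\<close>

fun DU_obj :: "('i \<Rightarrow> 'o) \<Rightarrow> ('i \<Rightarrow> 'i \<Rightarrow> 'o) \<Rightarrow> 'i s2obj \<Rightarrow> 'o" where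
  "DU_obj Ui P (Sing i) = Ui i"
| "DU_obj Ui P (Pr i j) = P i j"

definition pb_swap :: "('o, 'a) cat \<Rightarrow> ('i \<Rightarrow> 'i \<Rightarrow> 'o) \<Rightarrow> ('i \<Rightarrow> 'i \<Rightarrow> 'a) \<Rightarrow> ('i \<Rightarrow> 'i \<Rightarrow> 'a) \<Rightarrow> 'i \<Rightarrow> 'i \<Rightarrow> 'a" where
  "pb_swap C P p1 p2 i j = (THE h. h \<in> hom C (P j i) (P i j) \<and>
      Comp C (p1 i j) h = p2 j i \<and> Comp C (p2 i j) h = p1 j i)"

fun DU_arr :: "('o, 'a) cat \<Rightarrow> ('i \<Rightarrow> 'o) \<Rightarrow> ('i \<Rightarrow> 'i \<Rightarrow> 'o) \<Rightarrow> ('i \<Rightarrow> 'i \<Rightarrow> 'a) \<Rightarrow> ('i \<Rightarrow> 'i \<Rightarrow> 'a)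
               \<Rightarrow> 'i s2arr \<Rightarrow> 'a" where
  "DU_arr C Ui P p1 p2 (SId x) = Ident C (DU_obj Ui P x)"
| "DU_arr C Ui P p1 p2 (SIncl i j) = p1 i j"
| "DU_arr C Ui P p1 p2 (STau i j) = pb_swap C P p1 p2 i j"
| "DU_arr C Ui P p1 p2 (STauIncl i j) = Comp C (p1 i j) (pb_swap C P p1 p2 i j)"

end

theory Submission
  imports Defs
begin

(* A cocone over a functor F : S_2(I)^op -> C is determined by its legs at the singletons, and a
   family c_i : F(i) -> L extends to a cocone iff c_i o F(tau_{i,j} o i^s_{i,j}) = c_j o F(i^s_{j,i})
   for all i, j.  For D_U this says that c_i and c_j agree on U_j x_U U_i.  It then also holds
   for G: since lambda is a cocone with lambda_i = iota_i, the two legs G((j,i)) -> U_j, U_i form a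
   cone over (iota_j, iota_i) and so factor through the pullback.  Hence every cocone over D_U
   has the same singleton legs as some cocone over G, and since a morphism out of U commutes with
   a cocone as soon as it does so at the singletons, the universal property of lambda transfers
   to mu. *)

lemma cat_comp_hom:
  assumes "category C" "f \<in> hom C x y" "g \<in> hom C y z"
  shows "Comp C g f \<in> hom C x z"
  using assms unfolding category_def hom_def by auto

lemma cat_comp_assoc:
  assumes "category C" "f \<in> hom C x y" "g \<in> hom C y z" "h \<in> hom C z w"
  shows "Comp C (Comp C h g) f = Comp C h (Comp C g f)"
  using assms unfolding category_def hom_def by auto

lemma cat_comp_ident_right:
  assumes "category C" "f \<in> hom C x y"
  shows "Comp C f (Ident C x) = f"
  using assms unfolding category_def hom_def by auto

lemma cat_comp_ident_left:
  assumes "category C" "f \<in> hom C x y"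
  shows "Comp C (Ident C y) f = f"
  using assms unfolding category_def hom_def by auto

lemma cat_ident_hom:
  assumes "category C" "x \<in> Obj C"
  shows "Ident C x \<in> hom C x x"
  using assms unfolding category_def by auto

lemma cat_hom_Obj:
  assumes "category C" "f \<in> hom C x y"
  shows "x \<in> Obj C" "y \<in> Obj C"
  using assms unfolding category_def hom_def by auto

lemma is_pullbackD:
  assumes "is_pullback C f g P p q"
  shows "p \<in> hom C P (Dom C f)" "q \<in> hom C P (Dom C g)" "Comp C f p = Comp C g q" "P \<in> Obj C"
  using assms unfolding is_pullback_def by auto

lemma is_pullback_homD:
  assumes "is_pullback C f g P p q" "f \<in> hom C X Z" "g \<in> hom C Y Z"
  shows "p \<in> hom C P X" "q \<in> hom C P Y"
  using assms unfolding is_pullback_def hom_def by auto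

lemma pullback_factor:
  assumes "is_pullback C f g P p q"
    and "a \<in> hom C Q (Dom C f)" "b \<in> hom C Q (Dom C g)" "Comp C f a = Comp C g b"
  obtains h where "h \<in> hom C Q P" "Comp C p h = a" "Comp C q h = b"
  using assms unfolding is_pullback_def by blast

lemma pullback_arr_eqI:
  assumes "category C" "is_pullback C f g P p q"
    and "h \<in> hom C Q P" "h' \<in> hom C Q P"
    and "Comp C p h = Comp C p h'" "Comp C q h = Comp C q h'"
  shows "h = h'"
proof -
  have p: "p \<in> hom C P (Dom C f)" and q: "q \<in> hom C P (Dom C g)" and sq: "Comp C f p = Comp C g q"
    using is_pullbackD[OF assms(2)] by auto
  have f: "f \<in> hom C (Dom C f) (Cod C f)" and g: "g \<in> hom C (Dom C g) (Cod C f)"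
    using assms(2) unfolding is_pullback_def hom_def by auto
  have "Comp C f (Comp C p h) = Comp C g (Comp C q h)"
    using cat_comp_assoc[OF assms(1) assms(3) p f] cat_comp_assoc[OF assms(1) assms(3) q g] sq by simp
  then have "\<exists>!k. k \<in> hom C Q P \<and> Comp C p k = Comp C p h \<and> Comp C q k = Comp C q h"
    using assms(2) cat_comp_hom[OF assms(1) assms(3) p] cat_comp_hom[OF assms(1) assms(3) q]
    unfolding is_pullback_def by blast
  then show ?thesis using assms(3-6) by metis
qed

lemma pb_swap_spec:
  assumes "is_pullback C f g (P i j) (p i j) (q i j)" "is_pullback C g f (P j i) (p j i) (q j i)"
  shows "pb_swap C P p q i j \<in> hom C (P j i) (P i j)"
    and "Comp C (p i j) (pb_swap C P p q i j) = q j i"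
    and "Comp C (q i j) (pb_swap C P p q i j) = p j i"
proof -
  have "\<exists>!h. h \<in> hom C (P j i) (P i j) \<and> Comp C (p i j) h = q j i \<and> Comp C (q i j) h = p j i"
    using assms unfolding is_pullback_def by metis
  then have "pb_swap C P p q i j \<in> hom C (P j i) (P i j) \<and>
      Comp C (p i j) (pb_swap C P p q i j) = q j i \<and> Comp C (q i j) (pb_swap C P p q i j) = p j i"
    unfolding pb_swap_def by (rule theI')
  then show "pb_swap C P p q i j \<in> hom C (P j i) (P i j)"
    and "Comp C (p i j) (pb_swap C P p q i j) = q j i"
    and "Comp C (q i j) (pb_swap C P p q i j) = p j i"
    by auto
qed

lemma pb_swap_involutive:
  assumes "category C"
    and "is_pullback C f g (P i j) (p i j) (q i j)" "is_pullback C g f (P j i) (p j i) (q j i)"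
  shows "Comp C (pb_swap C P p q i j) (pb_swap C P p q j i) = Ident C (P i j)"
proof (rule pullback_arr_eqI[OF assms(1,2)])
  let ?s = "pb_swap C P p q i j" and ?s' = "pb_swap C P p q j i"
  note s = pb_swap_spec[where P = P and p = p and q = q, OF assms(2,3)]
    and s' = pb_swap_spec[where P = P and p = p and q = q, OF assms(3,2)]
  note p_hom = is_pullbackD(1)[OF assms(2)] and q_hom = is_pullbackD(2)[OF assms(2)]
  show "Comp C ?s ?s' \<in> hom C (P i j) (P i j)"
    using cat_comp_hom[OF assms(1) s'(1) s(1)] .
  show "Ident C (P i j) \<in> hom C (P i j) (P i j)"
    using cat_ident_hom[OF assms(1) is_pullbackD(4)[OF assms(2)]] .
  show "Comp C (p i j) (Comp C ?s ?s') = Comp C (p i j) (Ident C (P i j))"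
    using cat_comp_assoc[OF assms(1) s'(1) s(1) p_hom] s(2) s'(3) cat_comp_ident_right[OF assms(1) p_hom]
    by simp
  show "Comp C (q i j) (Comp C ?s ?s') = Comp C (q i j) (Ident C (P i j))"
    using cat_comp_assoc[OF assms(1) s'(1) s(1) q_hom] s(3) s'(2) cat_comp_ident_right[OF assms(1) q_hom]
    by simp
qed

lemma op_S2_simps [simp]:
  "Obj (op_cat (S2 I)) = Obj (S2 I)" "Arr (op_cat (S2 I)) = Arr (S2 I)"
  "Dom (op_cat (S2 I)) = s2cod" "Cod (op_cat (S2 I)) = s2dom"
  "Comp (op_cat (S2 I)) g f = s2comp f g" "Ident (op_cat (S2 I)) = SId"
  by (simp_all add: op_cat_def S2_def)

lemma S2_Obj_iff [simp]:
  "Sing i \<in> Obj (S2 I) \<longleftrightarrow> i \<in> I" "Pr i j \<in> Obj (S2 I) \<longleftrightarrow> i \<in> I \<and> j \<in> I"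
  by (auto simp: S2_def)

lemma S2_Arr_iff [simp]:
  "SId x \<in> Arr (S2 I) \<longleftrightarrow> x \<in> Obj (S2 I)"
  "SIncl i j \<in> Arr (S2 I) \<longleftrightarrow> i \<in> I \<and> j \<in> I"
  "STau i j \<in> Arr (S2 I) \<longleftrightarrow> i \<in> I \<and> j \<in> I"
  "STauIncl i j \<in> Arr (S2 I) \<longleftrightarrow> i \<in> I \<and> j \<in> I"
  by (cases x; auto simp: S2_def)+

lemma ball_S2_Obj:
  "(\<forall>x\<in>Obj (S2 I). Q x) \<longleftrightarrow> (\<forall>i\<in>I. Q (Sing i)) \<and> (\<forall>i\<in>I. \<forall>j\<in>I. Q (Pr i j))"
  by (auto simp: S2_def)

lemma ball_S2_Arr:
  "(\<forall>f\<in>Arr (S2 I). Q f) \<longleftrightarrow> (\<forall>x\<in>Obj (S2 I). Q (SId x)) \<and>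
     (\<forall>i\<in>I. \<forall>j\<in>I. Q (SIncl i j) \<and> Q (STau i j) \<and> Q (STauIncl i j))"
  by (auto simp: S2_def)

lemma S2_functorD:
  assumes "is_functor (op_cat (S2 I)) C Fo Fa" "i \<in> I" "j \<in> I"
  shows "Fa (SIncl i j) \<in> hom C (Fo (Pr i j)) (Fo (Sing i))"
    and "Fa (STau i j) \<in> hom C (Fo (Pr j i)) (Fo (Pr i j))"
    and "Fa (STauIncl i j) = Comp C (Fa (SIncl i j)) (Fa (STau i j))"
    and "Fa (STauIncl i j) \<in> hom C (Fo (Pr j i)) (Fo (Sing i))"
proof -
  have hom: "Fa f \<in> hom C (Fo (s2cod f)) (Fo (s2dom f))" if "f \<in> Arr (S2 I)" for f
    using assms(1) that unfolding is_functor_def by simp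
  show "Fa (SIncl i j) \<in> hom C (Fo (Pr i j)) (Fo (Sing i))"
    and "Fa (STau i j) \<in> hom C (Fo (Pr j i)) (Fo (Pr i j))"
    and "Fa (STauIncl i j) \<in> hom C (Fo (Pr j i)) (Fo (Sing i))"
    using hom[of "SIncl i j"] hom[of "STau i j"] hom[of "STauIncl i j"] assms(2,3) by auto
  have comp: "Fa (s2comp f g) = Comp C (Fa g) (Fa f)"
    if "f \<in> Arr (S2 I)" "g \<in> Arr (S2 I)" "s2dom f = s2cod g" for f g
    using assms(1) that unfolding is_functor_def by simp
  show "Fa (STauIncl i j) = Comp C (Fa (SIncl i j)) (Fa (STau i j))"
    using comp[of "STau i j" "SIncl i j"] assms(2,3) by simp
qed

lemma S2_functor_ident:
  assumes "is_functor (op_cat (S2 I)) C Fo Fa" "x \<in> Obj (S2 I)"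
  shows "Fa (SId x) = Ident C (Fo x)"
  using assms unfolding is_functor_def by simp

lemma S2_coconeD:
  assumes "is_cocone (op_cat (S2 I)) C Fo Fa L lam" "i \<in> I" "j \<in> I"
  shows "lam (Sing i) \<in> hom C (Fo (Sing i)) L"
    and "Comp C (lam (Sing i)) (Fa (SIncl i j)) = lam (Pr i j)"
    and "Comp C (lam (Sing i)) (Fa (STauIncl i j)) = lam (Pr j i)"
  using assms unfolding is_cocone_def by (auto simp: ball_S2_Obj ball_S2_Arr)

definition s2_compatible :: "('o, 'a) cat \<Rightarrow> 'i set \<Rightarrow> ('i s2arr \<Rightarrow> 'a) \<Rightarrow> ('i \<Rightarrow> 'a) \<Rightarrow> bool" where
  "s2_compatible C I Fa c \<longleftrightarrow>
     (\<forall>i\<in>I. \<forall>j\<in>I. Comp C (c i) (Fa (STauIncl i j)) = Comp C (c j) (Fa (SIncl j i)))"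

definition s2_extend :: "('o, 'a) cat \<Rightarrow> ('i s2arr \<Rightarrow> 'a) \<Rightarrow> ('i \<Rightarrow> 'a) \<Rightarrow> 'i s2obj \<Rightarrow> 'a" where
  "s2_extend C Fa c x = (case x of Sing i \<Rightarrow> c i | Pr i j \<Rightarrow> Comp C (c i) (Fa (SIncl i j)))"

lemma S2_cocone_compatible:
  assumes "is_cocone (op_cat (S2 I)) C Fo Fa L lam"
  shows "s2_compatible C I Fa (\<lambda>i. lam (Sing i))"
  using S2_coconeD(2,3)[OF assms] unfolding s2_compatible_def by metis

lemma is_cocone_s2_extend:
  assumes C: "category C" and F: "is_functor (op_cat (S2 I)) C Fo Fa" and "L \<in> Obj C"
    and c: "\<And>i. i \<in> I \<Longrightarrow> c i \<in> hom C (Fo (Sing i)) L"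
    and compat: "s2_compatible C I Fa c"
  shows "is_cocone (op_cat (S2 I)) C Fo Fa L (s2_extend C Fa c)"
proof -
  have leg: "s2_extend C Fa c x \<in> hom C (Fo x) L" if "x \<in> Obj (S2 I)" for x
    using that c cat_comp_hom[OF C S2_functorD(1)[OF F] c]
    by (cases x) (auto simp: s2_extend_def)
  have tau: "Comp C (s2_extend C Fa c (Pr i j)) (Fa (STau i j)) = s2_extend C Fa c (Pr j i)"
    if "i \<in> I" "j \<in> I" for i j
    using cat_comp_assoc[OF C S2_functorD(2,1)[OF F that] c[OF that(1)]] S2_functorD(3)[OF F that, symmetric]
      compat that unfolding s2_compatible_def s2_extend_def by simp
  show ?thesis
    unfolding is_cocone_def
    using \<open>L \<in> Obj C\<close> leg tau compat cat_comp_ident_right[OF C leg] S2_functor_ident[OF F]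
    by (simp add: ball_S2_Arr s2_compatible_def) (simp add: s2_extend_def)
qed

lemma S2_cocone_factors_iff:
  assumes C: "category C" and F: "is_functor (op_cat (S2 I)) C Fo Fa"
    and lam: "is_cocone (op_cat (S2 I)) C Fo Fa L lam"
    and mu: "is_cocone (op_cat (S2 I)) C Fo Fa L' mu"
    and v: "v \<in> hom C L L'"
  shows "(\<forall>x\<in>Obj (S2 I). Comp C v (lam x) = mu x) \<longleftrightarrow> (\<forall>i\<in>I. Comp C v (lam (Sing i)) = mu (Sing i))"
proof -
  have "Comp C v (lam (Pr i j)) = mu (Pr i j)"
    if "i \<in> I" "j \<in> I" "Comp C v (lam (Sing i)) = mu (Sing i)" for i j
    using cat_comp_assoc[OF C S2_functorD(1)[OF F that(1,2)] S2_coconeD(1)[OF lam that(1,2)] v]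
      S2_coconeD(2)[OF lam that(1,2)] S2_coconeD(2)[OF mu that(1,2)] that(3) by simp
  then show ?thesis by (auto simp: ball_S2_Obj)
qed

lemma S2_colimit_transfer:
  assumes C: "category C"
    and F: "is_functor (op_cat (S2 I)) C Fo Fa"
    and G: "is_functor (op_cat (S2 I)) C Go Ga"
    and sing: "\<And>i. i \<in> I \<Longrightarrow> Fo (Sing i) = Go (Sing i)"
    and lam: "is_colimit_cocone (op_cat (S2 I)) C Go Ga L lam"
    and leg: "is_cocone (op_cat (S2 I)) C Fo Fa L leg"
    and leg_sing: "\<And>i. i \<in> I \<Longrightarrow> leg (Sing i) = lam (Sing i)"
    and compat: "\<And>L' c. (\<And>i. i \<in> I \<Longrightarrow> c i \<in> hom C (Go (Sing i)) L') \<Longrightarrow>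
                   s2_compatible C I Fa c \<Longrightarrow> s2_compatible C I Ga c"
  shows "is_colimit_cocone (op_cat (S2 I)) C Fo Fa L leg"
  unfolding is_colimit_cocone_def
proof (intro conjI allI impI leg)
  fix L' mu
  assume mu: "is_cocone (op_cat (S2 I)) C Fo Fa L' mu"
  define nu where "nu = s2_extend C Ga (\<lambda>i. mu (Sing i))"
  have "L' \<in> Obj C"
    using mu unfolding is_cocone_def by simp
  moreover have mu_sing: "mu (Sing i) \<in> hom C (Go (Sing i)) L'" if "i \<in> I" for i
    using S2_coconeD(1)[OF mu that that] sing[OF that] by simp
  ultimately have nu: "is_cocone (op_cat (S2 I)) C Go Ga L' nu"
    unfolding nu_def
    by (intro is_cocone_s2_extend C G compat[OF mu_sing] S2_cocone_compatible[OF mu])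
  have lam_cocone: "is_cocone (op_cat (S2 I)) C Go Ga L lam"
    using lam unfolding is_colimit_cocone_def by simp
  have factors_iff: "(\<forall>x\<in>Obj (S2 I). Comp C u (leg x) = mu x) \<longleftrightarrow>
      (\<forall>x\<in>Obj (S2 I). Comp C u (lam x) = nu x)" if "u \<in> hom C L L'" for u
    using S2_cocone_factors_iff[OF C F leg mu that] S2_cocone_factors_iff[OF C G lam_cocone nu that]
      leg_sing by (simp add: nu_def s2_extend_def)
  have "\<exists>!u. u \<in> hom C L L' \<and> (\<forall>x\<in>Obj (S2 I). Comp C u (lam x) = nu x)"
    using lam nu unfolding is_colimit_cocone_def by simp
  then show "\<exists>!u. u \<in> hom C L L' \<and> (\<forall>x\<in>Obj (op_cat (S2 I)). Comp C u (leg x) = mu x)"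
    using factors_iff by (metis op_S2_simps(1))
qed

lemma is_functor_DU:
  assumes C: "category C" and \<iota>: "\<And>i. i \<in> I \<Longrightarrow> \<iota> i \<in> hom C (Ui i) U"
    and pb: "\<And>i j. i \<in> I \<Longrightarrow> j \<in> I \<Longrightarrow> is_pullback C (\<iota> i) (\<iota> j) (P i j) (p i j) (q i j)"
  shows "is_functor (op_cat (S2 I)) C (DU_obj Ui P) (DU_arr C Ui P p q)"
proof -
  let ?s = "pb_swap C P p q"
  have p: "p i j \<in> hom C (P i j) (Ui i)" if "i \<in> I" "j \<in> I" for i j
    using is_pullback_homD(1)[OF pb \<iota> \<iota>] that by blast
  have s: "?s i j \<in> hom C (P j i) (P i j)" "Comp C (p i j) (?s i j) = q j i"
    and ss: "Comp C (?s i j) (?s j i) = Ident C (P i j)" if "i \<in> I" "j \<in> I" for i j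
    using pb_swap_spec[where P = P and p = p and q = q, OF pb[OF that] pb[OF that(2,1)]]
      pb_swap_involutive[where P = P and p = p and q = q, OF C pb[OF that] pb[OF that(2,1)]]
    by blast+
  have obj: "DU_obj Ui P x \<in> Obj C" if "x \<in> Obj (S2 I)" for x
    using that cat_hom_Obj(1)[OF C \<iota>] is_pullbackD(4)[OF pb] by (cases x) auto
  have arr: "DU_arr C Ui P p q f \<in> hom C (DU_obj Ui P (s2cod f)) (DU_obj Ui P (s2dom f))"
    if "f \<in> Arr (S2 I)" for f
    using that obj cat_ident_hom[OF C] p s cat_comp_hom[OF C s(1) p] by (cases f) auto
  have comp: "DU_arr C Ui P p q (s2comp f g) = Comp C (DU_arr C Ui P p q g) (DU_arr C Ui P p q f)"
    if fg: "f \<in> Arr (S2 I)" "g \<in> Arr (S2 I)" "s2dom f = s2cod g" for f g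
  proof -
    consider (g_id) x where "g = SId x"
      | (f_id) x where "f = SId x" "\<nexists>y. g = SId y"
      | (tau) i j where "f = STau j i" "g \<in> {STau i j, SIncl j i, STauIncl i j}"
      using fg(3) by (cases f; cases g) auto
    then show ?thesis
    proof cases
      case g_id
      then show ?thesis
        using fg arr[OF fg(1)] cat_comp_ident_left[OF C] by auto
    next
      case f_id
      then show ?thesis
        using fg arr[OF fg(2)] cat_comp_ident_right[OF C] by (cases g) auto
    next
      case tau
      then show ?thesis
        using fg ss s cat_comp_assoc[OF C s(1) s(1) p] cat_comp_ident_right[OF C p] by auto
    qed
  qed
  show ?thesis
    unfolding is_functor_def using obj arr comp by simp
qed

lemma s2_compatible_DU_iff:
  assumes pb: "\<And>i j. i \<in> I \<Longrightarrow> j \<in> I \<Longrightarrow> is_pullback C (\<iota> i) (\<iota> j) (P i j) (p i j) (q i j)"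
  shows "s2_compatible C I (DU_arr C Ui P p q) c \<longleftrightarrow>
           (\<forall>i\<in>I. \<forall>j\<in>I. Comp C (c i) (q j i) = Comp C (c j) (p j i))"
proof -
  have "Comp C (p i j) (pb_swap C P p q i j) = q j i" if "i \<in> I" "j \<in> I" for i j
    using pb_swap_spec(2)[where P = P and p = p and q = q, OF pb[OF that] pb[OF that(2,1)]] .
  then show ?thesis
    unfolding s2_compatible_def by simp
qed

lemma s2_compatible_of_pullbacks:
  assumes C: "category C" and G: "is_functor (op_cat (S2 I)) C Go Ga"
    and lam: "is_cocone (op_cat (S2 I)) C Go Ga L lam"
    and sing: "\<And>i. i \<in> I \<Longrightarrow> Go (Sing i) = Ui i"
    and lam_sing: "\<And>i. i \<in> I \<Longrightarrow> lam (Sing i) = \<iota> i"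
    and pb: "\<And>i j. i \<in> I \<Longrightarrow> j \<in> I \<Longrightarrow> is_pullback C (\<iota> i) (\<iota> j) (P i j) (p i j) (q i j)"
    and c: "\<And>i. i \<in> I \<Longrightarrow> c i \<in> hom C (Ui i) L'"
    and matching: "\<forall>i\<in>I. \<forall>j\<in>I. Comp C (c i) (q j i) = Comp C (c j) (p j i)"
  shows "s2_compatible C I Ga c"
  unfolding s2_compatible_def
proof (intro ballI)
  fix i j
  assume ij: "i \<in> I" "j \<in> I"
  have \<iota>: "\<iota> k \<in> hom C (Ui k) L" if "k \<in> I" for k
    using S2_coconeD(1)[OF lam that that] sing[OF that] lam_sing[OF that] by simp
  then have dom_\<iota>: "Dom C (\<iota> k) = Ui k" if "k \<in> I" for k
    using that by (simp add: hom_def)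
  have p: "p j i \<in> hom C (P j i) (Ui j)" and q: "q j i \<in> hom C (P j i) (Ui i)"
    using is_pullback_homD[OF pb \<iota> \<iota>] ij by blast+
  have "Ga (SIncl j i) \<in> hom C (Go (Pr j i)) (Dom C (\<iota> j))"
    and "Ga (STauIncl i j) \<in> hom C (Go (Pr j i)) (Dom C (\<iota> i))"
    using S2_functorD(1)[OF G ij(2,1)] S2_functorD(4)[OF G ij] sing dom_\<iota> ij by simp_all
  moreover have "Comp C (\<iota> j) (Ga (SIncl j i)) = Comp C (\<iota> i) (Ga (STauIncl i j))"
    using S2_coconeD(2)[OF lam ij(2,1)] S2_coconeD(3)[OF lam ij] lam_sing ij by simp
  ultimately obtain h where h: "h \<in> hom C (Go (Pr j i)) (P j i)"
      "Comp C (p j i) h = Ga (SIncl j i)" "Comp C (q j i) h = Ga (STauIncl i j)"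
    using pullback_factor[OF pb[OF ij(2,1)]] by blast
  have "Comp C (c i) (Ga (STauIncl i j)) = Comp C (Comp C (c i) (q j i)) h"
    using cat_comp_assoc[OF C h(1) q c[OF ij(1)]] h(3) by simp
  also have "\<dots> = Comp C (Comp C (c j) (p j i)) h"
    using matching ij by simp
  also have "\<dots> = Comp C (c j) (Ga (SIncl j i))"
    using cat_comp_assoc[OF C h(1) p c[OF ij(2)]] h(2) by simp
  finally show "Comp C (c i) (Ga (STauIncl i j)) = Comp C (c j) (Ga (SIncl j i))" .
qed

lemma is_cocone_DU_sink:
  assumes C: "category C" and "U \<in> Obj C" and \<iota>: "\<And>i. i \<in> I \<Longrightarrow> \<iota> i \<in> hom C (Ui i) U"
    and pb: "\<And>i j. i \<in> I \<Longrightarrow> j \<in> I \<Longrightarrow> is_pullback C (\<iota> i) (\<iota> j) (P i j) (p i j) (q i j)"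
  shows "is_cocone (op_cat (S2 I)) C (DU_obj Ui P) (DU_arr C Ui P p q) U (s2_extend C (DU_arr C Ui P p q) \<iota>)"
proof (rule is_cocone_s2_extend[OF C is_functor_DU[OF C \<iota> pb] \<open>U \<in> Obj C\<close>])
  show "\<iota> i \<in> hom C (DU_obj Ui P (Sing i)) U" if "i \<in> I" for i
    using \<iota>[OF that] by simp
  have "\<forall>i\<in>I. \<forall>j\<in>I. Comp C (\<iota> i) (q j i) = Comp C (\<iota> j) (p j i)"
    using is_pullbackD(3)[OF pb] by simp
  then show "s2_compatible C I (DU_arr C Ui P p q) \<iota>"
    using s2_compatible_DU_iff[where I = I and \<iota> = \<iota> and p = p and q = q, OF pb] by simp
qed

theorem mainTheorem5:
  fixes C :: "('o, 'a) cat" and I :: "'i set"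
    and U :: 'o and Ui :: "'i \<Rightarrow> 'o" and \<iota> :: "'i \<Rightarrow> 'a"
    and Go :: "'i s2obj \<Rightarrow> 'o" and Ga :: "'i s2arr \<Rightarrow> 'a" and lam :: "'i s2obj \<Rightarrow> 'a"
    and P :: "'i \<Rightarrow> 'i \<Rightarrow> 'o" and p1 p2 :: "'i \<Rightarrow> 'i \<Rightarrow> 'a"
  assumes cat: "category C"
    and pbs: "has_pullbacks C"
    and sink: "U \<in> Obj C" "\<forall>i\<in>I. \<iota> i \<in> hom C (Ui i) U"
    and G: "is_functor (op_cat (S2 I)) C Go Ga"
    and G_sing: "\<forall>i\<in>I. Go (Sing i) = Ui i"
    and colim: "is_colimit_cocone (op_cat (S2 I)) C Go Ga U lam"
    and lam_sing: "\<forall>i\<in>I. lam (Sing i) = \<iota> i"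
    and pb: "\<forall>i\<in>I. \<forall>j\<in>I. is_pullback C (\<iota> i) (\<iota> j) (P i j) (p1 i j) (p2 i j)"
  shows "is_colimit_cocone (op_cat (S2 I)) C (DU_obj Ui P) (DU_arr C Ui P p1 p2) U
           (\<lambda>x. case x of Sing i \<Rightarrow> \<iota> i | Pr i j \<Rightarrow> Comp C (\<iota> i) (p1 i j))"
proof -
  have \<iota>: "\<And>i. i \<in> I \<Longrightarrow> \<iota> i \<in> hom C (Ui i) U" using sink(2) by blast
  have pb: "\<And>i j. i \<in> I \<Longrightarrow> j \<in> I \<Longrightarrow> is_pullback C (\<iota> i) (\<iota> j) (P i j) (p1 i j) (p2 i j)"
    using pb by blast
  have legs: "(\<lambda>x. case x of Sing i \<Rightarrow> \<iota> i | Pr i j \<Rightarrow> Comp C (\<iota> i) (p1 i j)) =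
      s2_extend C (DU_arr C Ui P p1 p2) \<iota>"
    by (auto simp: s2_extend_def split: s2obj.split)
  have lam: "is_cocone (op_cat (S2 I)) C Go Ga U lam"
    using colim unfolding is_colimit_cocone_def by simp
  show ?thesis
    unfolding legs
  proof (rule S2_colimit_transfer[OF cat is_functor_DU[OF cat \<iota> pb] G _ colim
        is_cocone_DU_sink[OF cat sink(1) \<iota> pb]])
    fix L' c
    assume c: "\<And>i. i \<in> I \<Longrightarrow> c i \<in> hom C (Go (Sing i)) L'"
      and "s2_compatible C I (DU_arr C Ui P p1 p2) c"
    then have matching: "\<forall>i\<in>I. \<forall>j\<in>I. Comp C (c i) (p2 j i) = Comp C (c j) (p1 j i)"
      using s2_compatible_DU_iff[where I = I and \<iota> = \<iota> and p = p1 and q = p2, OF pb] by simp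
    show "s2_compatible C I Ga c"
      by (rule s2_compatible_of_pullbacks[where p = p1 and q = p2, OF cat G lam _ _ pb _ matching])
        (use c G_sing lam_sing in auto)
  qed (use G_sing lam_sing in \<open>auto simp: s2_extend_def\<close>)
qed

end
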